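(* Let $N\ge1$, $\varepsilon>0$, and let $(b_m)_{m\le N}$ be complex numbers. Let $f$ be a smooth function on $\mathbb R$ such that for some $X>0$ and $Y\ge N^{\varepsilon}$, for $|y|\le2$, $$f(0)=0,\qquad f'(0)=X,\qquad f^{(j+1)}(y)\ll XY^{-j}\ \ (j\ge1).$$ Then there is a nonnegative Schwartz-class function $q$, depending only on $\varepsilon$ and the implied constants in these hypotheses, satisfying $x^jq^{(j)}(x)\ll_{j,C}(1+|x|)^{-C}$, such that $$\int_{-1}^1\Big|\sum_{m\le N}b_me(mf(y))\Big|^2dy\le\int_{\mathbb R}q(y)\Big|\sum_{m\le N}b_me(mXy)\Big|^2dy+O\Big(N^{-100}\sum_{m\le N}|b_m|^2\Big).$$
   Context: $e(x)=e^{2\pi ix}$. *)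

theory Defs
  imports "HOL-Analysis.Analysis"
begin

definition e :: "real \<Rightarrow> complex" where
  "e x = exp (2 * of_real pi * \<i> * complex_of_real x)"

definition smooth_real :: "(real \<Rightarrow> real) \<Rightarrow> bool" where
  "smooth_real f \<longleftrightarrow> (\<forall>k x. ((deriv ^^ k) f has_real_derivative (deriv ^^ Suc k) f x) (at x))"

definition schwartz :: "(real \<Rightarrow> real) \<Rightarrow> bool" where
  "schwartz q \<longleftrightarrow> smooth_real q \<and>
     (\<forall>j k. \<exists>K. \<forall>x. \<bar>x ^ k * (deriv ^^ j) q x\<bar> \<le> K)"

end

theory Submission
  imports Defs "HOL-Computational_Algebra.Polynomial" "HOL-Probability.Distributions"
begin

text \<open>The weight is a Gaussian, scaled so that it is at least 2 on [-2, 2]; derivatives of a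
  polynomial times a Gaussian are again of this form, which gives the Schwartz bounds.
  Of the derivative hypotheses only the one on f'' matters: once N powr \<epsilon> \<ge> 2|A 1| + 1 it keeps
  f' within X/2 of X on [-1, 1], so u = f(y)/X is a change of variables with du/dy \<ge> 1/2
  mapping [-1, 1] into [-2, 2]. Hence the left-hand side is at most twice the integral of
  |\<Sum> b m e(m X u)|^2 over [-2, 2], which the weight dominates. For the finitely many smaller N
  the trivial bound 2 N \<Sum> |b m|^2 is absorbed into the error term.\<close>

section \<open>Polynomials times a Gaussian\<close>

lemma power_div_fact_le_exp:
  fixes x :: real
  assumes "x \<ge> 0"
  shows "x ^ n / fact n \<le> exp x"
proof -
  have s: "(\<lambda>n. x ^ n /\<^sub>R fact n) sums exp x"
    by (rule exp_converges)
  have "(\<Sum>i\<in>{n}. x ^ i /\<^sub>R fact i) \<le> suminf (\<lambda>n. x ^ n /\<^sub>R fact n)"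
    by (rule sum_le_suminf) (use s assms in \<open>auto simp: sums_iff\<close>)
  then show ?thesis
    using s by (simp add: sums_iff divide_inverse mult.commute)
qed

lemma abs_poly_le:
  fixes p :: "real poly"
  shows "\<bar>poly p x\<bar> \<le> (\<Sum>i\<le>degree p. \<bar>coeff p i\<bar>) * (1 + \<bar>x\<bar>) ^ degree p"
proof -
  have "\<bar>poly p x\<bar> = \<bar>\<Sum>i\<le>degree p. coeff p i * x ^ i\<bar>"
    by (simp add: poly_altdef)
  also have "\<dots> \<le> (\<Sum>i\<le>degree p. \<bar>coeff p i * x ^ i\<bar>)"
    by (rule sum_abs)
  also have "\<dots> \<le> (\<Sum>i\<le>degree p. \<bar>coeff p i\<bar> * (1 + \<bar>x\<bar>) ^ degree p)"
  proof (rule sum_mono)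
    fix i assume "i \<in> {..degree p}"
    then have "\<bar>x\<bar> ^ i \<le> (1 + \<bar>x\<bar>) ^ i" "(1 + \<bar>x\<bar>) ^ i \<le> (1 + \<bar>x\<bar>) ^ degree p"
      by (auto intro!: power_mono power_increasing)
    then show "\<bar>coeff p i * x ^ i\<bar> \<le> \<bar>coeff p i\<bar> * (1 + \<bar>x\<bar>) ^ degree p"
      by (simp add: abs_mult power_abs mult_left_mono)
  qed
  also have "\<dots> = (\<Sum>i\<le>degree p. \<bar>coeff p i\<bar>) * (1 + \<bar>x\<bar>) ^ degree p"
    by (simp add: sum_distrib_right)
  finally show ?thesis .
qed

lemma exp_neg_square_le_powr:
  fixes C :: real
  shows "\<exists>K. \<forall>x. exp (-(x\<^sup>2)) \<le> K * (1 + \<bar>x\<bar>) powr (-C)"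
proof -
  define n where "n = nat \<lceil>C\<rceil>"
  show ?thesis
  proof (intro exI allI)
    fix x :: real
    define t where "t = 1 + \<bar>x\<bar>"
    have t1: "t \<ge> 1"
      by (simp add: t_def)
    have "t - 5/4 \<le> x\<^sup>2"
      using sum_squares_ge_zero[of "\<bar>x\<bar> - 1/2" 0] by (simp add: t_def power2_eq_square algebra_simps)
    then have "exp (-(x\<^sup>2)) \<le> exp (5/4) * exp (-t)"
      by (simp flip: exp_add)
    also have "exp (-t) \<le> fact n / t ^ n"
      using power_div_fact_le_exp[of t n] t1 by (simp add: exp_minus field_simps)
    also have "fact n / t ^ n = fact n * t powr (- real n)"
      using t1 by (simp add: powr_minus powr_realpow divide_inverse)
    also have "\<dots> \<le> fact n * t powr (-C)"
      using t1 by (intro mult_left_mono powr_mono) (auto simp: n_def real_nat_ceiling_ge)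
    finally show "exp (-(x\<^sup>2)) \<le> (exp (5/4) * fact n) * (1 + \<bar>x\<bar>) powr (-C)"
      by (simp add: t_def mult.assoc)
  qed
qed

lemma poly_exp_neg_square_decay:
  fixes p :: "real poly" and C :: real
  shows "\<exists>K. \<forall>x. \<bar>poly p x * exp (-(x\<^sup>2))\<bar> \<le> K * (1 + \<bar>x\<bar>) powr (-C)"
proof -
  define M where "M = (\<Sum>i\<le>degree p. \<bar>coeff p i\<bar>)"
  obtain K where K: "\<And>x. exp (-(x\<^sup>2)) \<le> K * (1 + \<bar>x\<bar>) powr (-(C + degree p))"
    using exp_neg_square_le_powr by blast
  show ?thesis
  proof (intro exI allI)
    fix x :: real
    have "\<bar>poly p x * exp (-(x\<^sup>2))\<bar> \<le> M * (1 + \<bar>x\<bar>) ^ degree p * (K * (1 + \<bar>x\<bar>) powr (-(C + degree p)))"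
      unfolding abs_mult M_def by (intro mult_mono abs_poly_le) (use K in auto)
    also have "\<dots> = M * K * (1 + \<bar>x\<bar>) powr (-C)"
      by (simp add: powr_realpow[symmetric] powr_add[symmetric] add.commute[of 1])
    finally show "\<bar>poly p x * exp (-(x\<^sup>2))\<bar> \<le> M * K * (1 + \<bar>x\<bar>) powr (-C)" .
  qed
qed

definition gaussian_deriv_poly :: "real poly \<Rightarrow> real poly" where
  "gaussian_deriv_poly p = pderiv p - [:0, 2:] * p"

lemma has_real_derivative_poly_exp_neg_square:
  "((\<lambda>x. poly p x * exp (-(x\<^sup>2))) has_real_derivative
     poly (gaussian_deriv_poly p) x * exp (-(x\<^sup>2))) (at x)"
  unfolding gaussian_deriv_poly_def by (auto intro!: derivative_eq_intros simp: algebra_simps)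

lemma deriv_funpow_poly_exp_neg_square:
  "(deriv ^^ n) (\<lambda>x. poly p x * exp (-(x\<^sup>2))) =
     (\<lambda>x. poly ((gaussian_deriv_poly ^^ n) p) x * exp (-(x\<^sup>2)))"
proof (induction n)
  case (Suc n)
  show ?case
    by (simp add: Suc.IH fun_eq_iff DERIV_imp_deriv[OF has_real_derivative_poly_exp_neg_square])
qed simp

lemma smooth_real_poly_exp_neg_square: "smooth_real (\<lambda>x. poly p x * exp (-(x\<^sup>2)))"
  unfolding smooth_real_def deriv_funpow_poly_exp_neg_square
  using has_real_derivative_poly_exp_neg_square by simp

lemma poly_exp_neg_square_deriv_decay:
  fixes p :: "real poly"
  shows "\<exists>K. \<forall>x. \<bar>x ^ k * (deriv ^^ j) (\<lambda>x. poly p x * exp (-(x\<^sup>2))) x\<bar> \<le> K * (1 + \<bar>x\<bar>) powr (-C)"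
  using poly_exp_neg_square_decay[of "monom 1 k * (gaussian_deriv_poly ^^ j) p" C]
  by (simp add: deriv_funpow_poly_exp_neg_square poly_monom mult.assoc)

lemma schwartz_poly_exp_neg_square: "schwartz (\<lambda>x. poly p x * exp (-(x\<^sup>2)))"
  unfolding schwartz_def
proof (intro conjI allI smooth_real_poly_exp_neg_square)
  fix j k
  obtain K where K: "\<And>x. \<bar>x ^ k * (deriv ^^ j) (\<lambda>x. poly p x * exp (-(x\<^sup>2))) x\<bar>
                         \<le> K * (1 + \<bar>x\<bar>) powr (-0)"
    using poly_exp_neg_square_deriv_decay by blast
  show "\<exists>K. \<forall>x. \<bar>x ^ k * (deriv ^^ j) (\<lambda>x. poly p x * exp (-(x\<^sup>2))) x\<bar> \<le> K"
  proof (intro exI allI)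
    fix x :: real
    show "\<bar>x ^ k * (deriv ^^ j) (\<lambda>x. poly p x * exp (-(x\<^sup>2))) x\<bar> \<le> K"
      using K[of x] by (simp add: add_nonneg_eq_0_iff)
  qed
qed

section \<open>The Gaussian weight\<close>

definition gauss_weight :: "real \<Rightarrow> real" where
  "gauss_weight x = 2 * exp 4 * exp (-(x\<^sup>2))"

lemma gauss_weight_eq_poly_exp: "gauss_weight = (\<lambda>x. poly [:2 * exp 4:] x * exp (-(x\<^sup>2)))"
  by (simp add: gauss_weight_def fun_eq_iff)

lemma schwartz_gauss_weight: "schwartz gauss_weight"
  unfolding gauss_weight_eq_poly_exp by (rule schwartz_poly_exp_neg_square)

lemma gauss_weight_deriv_decay:
  "\<exists>K. \<forall>x. \<bar>x ^ k * (deriv ^^ j) gauss_weight x\<bar> \<le> K * (1 + \<bar>x\<bar>) powr (-C)"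
  unfolding gauss_weight_eq_poly_exp by (rule poly_exp_neg_square_deriv_decay)

lemma gauss_weight_nonneg: "gauss_weight x \<ge> 0"
  by (simp add: gauss_weight_def)

lemma gauss_weight_ge_2:
  assumes "\<bar>x\<bar> \<le> 2"
  shows "gauss_weight x \<ge> 2"
proof -
  have "x\<^sup>2 \<le> 4"
    using power_mono[of "\<bar>x\<bar>" 2 2] assms by simp
  then have "2 * exp 4 * exp (-4) \<le> 2 * exp 4 * exp (-(x\<^sup>2))"
    by simp
  moreover have "exp 4 * exp (-4) = (1::real)"
    by (simp flip: exp_add)
  ultimately show ?thesis
    by (simp add: gauss_weight_def)
qed

lemma integrable_on_gauss_weight_mult:
  fixes h :: "real \<Rightarrow> real"
  assumes h: "continuous_on UNIV h" "\<And>y. \<bar>h y\<bar> \<le> M"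
  shows "(\<lambda>y. gauss_weight y * h y) integrable_on UNIV"
proof (rule integrable_on_all_intervals_integrable_bound[where g = "\<lambda>y. M * gauss_weight y"])
  have "integrable lborel (\<lambda>x::real. exp (-x\<^sup>2))"
    using has_bochner_integral_even_function[OF gaussian_moment_even_pos[where k = 0]]
    by (simp add: has_bochner_integral_iff)
  then have "(\<lambda>x::real. exp (-x\<^sup>2)) integrable_on UNIV"
    by (rule integrable_on_lborel)
  from integrable_cmul[OF this, of "M * (2 * exp 4)"]
  show "(\<lambda>y. M * gauss_weight y) integrable_on UNIV"
    by (simp add: gauss_weight_def mult.assoc)
  show "(\<lambda>x. if x \<in> UNIV then gauss_weight x * h x else 0) integrable_on cbox a b" for a b
    unfolding gauss_weight_def
    by (auto intro!: integrable_continuous_real continuous_intros continuous_on_subset[OF h(1)])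
  show "norm (gauss_weight x * h x) \<le> M * gauss_weight x" for x
    using mult_left_mono[OF h(2)[of x] gauss_weight_nonneg[of x]]
    by (simp add: abs_mult abs_of_nonneg[OF gauss_weight_nonneg] mult.commute)
qed

lemma integral_gauss_weight_mult_nonneg:
  fixes h :: "real \<Rightarrow> real"
  assumes "\<And>y. h y \<ge> 0"
  shows "integral UNIV (\<lambda>y. gauss_weight y * h y) \<ge> 0"
proof (cases "(\<lambda>y. gauss_weight y * h y) integrable_on UNIV")
  case True
  then show ?thesis
    by (rule integral_nonneg) (simp add: assms gauss_weight_nonneg)
qed (simp add: not_integrable_integral)

section \<open>Change of variables\<close>

lemma integral_compose_le:
  fixes g g' h :: "real \<Rightarrow> real"
  assumes "a \<le> b" "c > 0"
    and g: "\<And>y. y \<in> {a..b} \<Longrightarrow> (g has_real_derivative g' y) (at y)"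
    and g'_ge: "\<And>y. y \<in> {a..b} \<Longrightarrow> g' y \<ge> c"
    and g_image: "g ` {a..b} \<subseteq> {u..v}"
    and h: "continuous_on {u..v} h" "\<And>t. t \<in> {u..v} \<Longrightarrow> h t \<ge> 0"
  shows "integral {a..b} (\<lambda>y. h (g y)) \<le> integral {u..v} h / c"
proof -
  have mono: "g a \<le> g b"
    using deriv_nonneg_imp_mono[OF g _ \<open>a \<le> b\<close>] g'_ge \<open>c > 0\<close> by fastforce
  have subst: "((\<lambda>y. g' y *\<^sub>R h (g y)) has_integral integral {g a..g b} h) {a..b}"
    using \<open>a \<le> b\<close> g_image
    by (intro has_integral_substitution[OF _ mono g_image h(1)])
      (auto intro!: has_field_derivative_at_within[OF g])
  have "continuous_on {a..b} g"
    using g by (intro DERIV_continuous_on) (auto intro: has_field_derivative_at_within)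
  then have hg_int: "(\<lambda>y. h (g y)) integrable_on {a..b}"
    by (intro integrable_continuous_real continuous_on_compose2[OF h(1)] g_image)
  have "integral {a..b} (\<lambda>y. h (g y)) \<le> integral {a..b} (\<lambda>y. g' y *\<^sub>R h (g y) / c)"
  proof (rule integral_le[OF hg_int])
    show "(\<lambda>y. g' y *\<^sub>R h (g y) / c) integrable_on {a..b}"
      using subst by (intro integrable_on_divide) (auto simp: has_integral_integrable)
    fix y assume y: "y \<in> {a..b}"
    then have "h (g y) \<ge> 0"
      using g_image h(2) by blast
    then have "c * h (g y) \<le> g' y * h (g y)"
      by (rule mult_right_mono[OF g'_ge[OF y]])
    then show "h (g y) \<le> g' y *\<^sub>R h (g y) / c"
      using \<open>c > 0\<close> by (simp add: le_divide_eq mult.commute)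
  qed
  also have "\<dots> = integral {g a..g b} h / c"
    using subst by (simp add: integral_unique)
  also have "\<dots> \<le> integral {u..v} h / c"
  proof (intro divide_right_mono integral_subset_le)
    have "g a \<in> {u..v}" "g b \<in> {u..v}"
      using g_image \<open>a \<le> b\<close> by (auto simp: image_subset_iff)
    then show "{g a..g b} \<subseteq> {u..v}"
      by auto
    then show "h integrable_on {g a..g b}"
      by (intro integrable_continuous_real continuous_on_subset[OF h(1)])
  qed (use h \<open>c > 0\<close> in \<open>auto intro: integrable_continuous_real\<close>)
  finally show ?thesis .
qed

lemma integral_compose_le_gauss_weight:
  fixes g g' h :: "real \<Rightarrow> real"
  assumes g: "\<And>y. (g has_real_derivative g' y) (at y)"
    and g'_near_1: "\<And>y. \<bar>y\<bar> \<le> 1 \<Longrightarrow> \<bar>g' y - 1\<bar> \<le> 1/2" and "g 0 = 0"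
    and h: "continuous_on UNIV h" "\<And>t. h t \<ge> 0" "\<And>t. h t \<le> M"
  shows "integral {-1..1} (\<lambda>y. h (g y)) \<le> integral UNIV (\<lambda>y. gauss_weight y * h y)"
proof -
  have hc: "continuous_on {-2..2} h"
    using h(1) by (rule continuous_on_subset) simp
  have wh_int: "(\<lambda>y. gauss_weight y * h y) integrable_on {-2..2}"
    unfolding gauss_weight_def by (intro integrable_continuous_real continuous_intros hc)
  have g'_bounds: "1/2 \<le> g' y" "\<bar>g' y\<bar> \<le> 3/2" if "\<bar>y\<bar> \<le> 1" for y
    using g'_near_1[OF that] by arith+
  then have "norm (g y - g 0) \<le> 3/2 * norm (y - 0)" if "y \<in> {-1..1}" for y
    using that
    by (intro field_differentiable_bound[of "{-1..1}" g g']) (auto intro: has_field_derivative_at_within g)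
  then have "g ` {-1..1} \<subseteq> {-2..2}"
    using \<open>g 0 = 0\<close> by force
  then have "integral {-1..1} (\<lambda>y. h (g y)) \<le> integral {-2..2} h / (1/2)"
    using g'_bounds(1) h(2) by (intro integral_compose_le[OF _ _ g _ _ hc]) auto
  also have "\<dots> = integral {-2..2} (\<lambda>y. 2 * h y)"
    by simp
  also have "\<dots> \<le> integral {-2..2} (\<lambda>y. gauss_weight y * h y)"
  proof (rule integral_le[OF _ wh_int])
    show "(\<lambda>y. 2 * h y) integrable_on {-2..2}"
      by (intro integrable_continuous_real continuous_intros hc)
    show "2 * h y \<le> gauss_weight y * h y" if "y \<in> {-2..2}" for y
      using gauss_weight_ge_2[of y] that h(2)[of y] by (intro mult_right_mono) auto
  qed
  also have "\<dots> \<le> integral UNIV (\<lambda>y. gauss_weight y * h y)"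
  proof (rule integral_subset_le[OF _ wh_int])
    show "(\<lambda>y. gauss_weight y * h y) integrable_on UNIV"
      by (rule integrable_on_gauss_weight_mult[where M = M, OF h(1)]) (simp add: abs_of_nonneg h(2) h(3))
  qed (simp_all add: h(2) gauss_weight_nonneg)
  finally show ?thesis .
qed

section \<open>Exponential sums\<close>

lemma norm_e [simp]: "cmod (e x) = 1"
  unfolding e_def by (simp add: norm_exp_eq_Re)

lemma continuous_on_e [continuous_intros]:
  "continuous_on S u \<Longrightarrow> continuous_on S (\<lambda>x. e (u x))"
  unfolding e_def by (intro continuous_intros)

lemma exp_sum_norm_square_le:
  fixes b :: "nat \<Rightarrow> complex"
  shows "(cmod (\<Sum>m=1..N. b m * e (t m)))\<^sup>2 \<le> real N * (\<Sum>m=1..N. (cmod (b m))\<^sup>2)"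
proof -
  have "cmod (\<Sum>m=1..N. b m * e (t m)) \<le> (\<Sum>m=1..N. cmod (b m))"
    using norm_sum[of "\<lambda>m. b m * e (t m)" "{1..N}"] by (simp add: norm_mult)
  then have "(cmod (\<Sum>m=1..N. b m * e (t m)))\<^sup>2 \<le> (\<Sum>m=1..N. cmod (b m))\<^sup>2"
    by (intro power_mono) auto
  also have "\<dots> \<le> real N * (\<Sum>m=1..N. (cmod (b m))\<^sup>2)"
    using sum_squared_le_sum_of_squares[of "\<lambda>m. cmod (b m)" "{1..N}"] by (simp add: mult.commute)
  finally show ?thesis .
qed

lemma exp_sum_mean_square_le_trivial:
  fixes b :: "nat \<Rightarrow> complex" and f :: "real \<Rightarrow> real"
  assumes "continuous_on {-1..1} f"
  shows "integral {-1..1} (\<lambda>y. (cmod (\<Sum>m=1..N. b m * e (real m * f y)))\<^sup>2)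
           \<le> 2 * real N * (\<Sum>m=1..N. (cmod (b m))\<^sup>2)"
proof -
  have "integral {-1..1} (\<lambda>y. (cmod (\<Sum>m=1..N. b m * e (real m * f y)))\<^sup>2)
          \<le> integral {-1..1::real} (\<lambda>y. real N * (\<Sum>m=1..N. (cmod (b m))\<^sup>2))"
  proof (rule integral_le)
    show "(\<lambda>y. (cmod (\<Sum>m=1..N. b m * e (real m * f y)))\<^sup>2) integrable_on {-1..1}"
      by (intro integrable_continuous_real continuous_intros assms)
    show "(\<lambda>y. real N * (\<Sum>m=1..N. (cmod (b m))\<^sup>2)) integrable_on {-1..1::real}"
      by (rule integrable_const_ivl)
    show "(cmod (\<Sum>m=1..N. b m * e (real m * f y)))\<^sup>2 \<le> real N * (\<Sum>m=1..N. (cmod (b m))\<^sup>2)" for y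
      by (rule exp_sum_norm_square_le)
  qed
  then show ?thesis
    by simp
qed

lemma smooth_real_imp_has_real_derivative:
  assumes "smooth_real f"
  shows "(f has_real_derivative deriv f x) (at x)"
  using assms[unfolded smooth_real_def, rule_format, of 0 x] by simp

lemma smooth_real_imp_continuous_on:
  assumes "smooth_real f"
  shows "continuous_on S f"
  using smooth_real_imp_has_real_derivative[OF assms]
  by (intro DERIV_continuous_on) (auto intro: has_field_derivative_at_within)

lemma smooth_real_imp_deriv_has_real_derivative:
  assumes "smooth_real f"
  shows "(deriv f has_real_derivative (deriv ^^ 2) f x) (at x)"
  using assms[unfolded smooth_real_def, rule_format, of 1 x] by (simp add: numeral_2_eq_2)

lemma exp_sum_mean_square_le_weighted:
  fixes b :: "nat \<Rightarrow> complex" and f :: "real \<Rightarrow> real"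
  assumes f: "smooth_real f" and "X > 0" "f 0 = 0" "deriv f 0 = X"
    and f''_bound: "\<And>y. \<bar>y\<bar> \<le> 1 \<Longrightarrow> \<bar>(deriv ^^ 2) f y\<bar> \<le> X / 2"
  shows "integral {-1..1} (\<lambda>y. (cmod (\<Sum>m=1..N. b m * e (real m * f y)))\<^sup>2)
           \<le> integral UNIV (\<lambda>y. gauss_weight y * (cmod (\<Sum>m=1..N. b m * e (real m * X * y)))\<^sup>2)"
proof -
  define h where "h u = (cmod (\<Sum>m=1..N. b m * e (real m * X * u)))\<^sup>2" for u
  note f' = smooth_real_imp_has_real_derivative[OF f]
    and f'' = smooth_real_imp_deriv_has_real_derivative[OF f]
  have "\<bar>deriv f y - X\<bar> \<le> X / 2" if "\<bar>y\<bar> \<le> 1" for y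
  proof -
    have "norm (deriv f y - deriv f 0) \<le> X / 2 * norm (y - 0)"
      using that f''_bound by (intro field_differentiable_bound[of "{-1..1}" _ "(deriv ^^ 2) f"])
        (auto intro: has_field_derivative_at_within f'')
    also have "\<dots> \<le> X / 2"
      using that \<open>X > 0\<close> by (simp add: mult_left_le)
    finally show ?thesis
      using \<open>deriv f 0 = X\<close> by simp
  qed
  then have g'_near_1: "\<bar>deriv f y / X - 1\<bar> \<le> 1/2" if "\<bar>y\<bar> \<le> 1" for y
    using that \<open>X > 0\<close> by (simp add: abs_le_iff field_simps)
  have hc: "continuous_on UNIV h"
    unfolding h_def by (intro continuous_intros)
  have h_bound: "h u \<le> real N * (\<Sum>m=1..N. (cmod (b m))\<^sup>2)" for u
    unfolding h_def by (rule exp_sum_norm_square_le)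
  have "integral {-1..1} (\<lambda>y. h (f y / X)) \<le> integral UNIV (\<lambda>y. gauss_weight y * h y)"
  proof (rule integral_compose_le_gauss_weight[OF _ g'_near_1 _ hc _ h_bound])
    show "((\<lambda>y. f y / X) has_real_derivative deriv f y / X) (at y)" for y
      by (rule DERIV_cdivide[OF f'])
  qed (simp_all add: h_def \<open>f 0 = 0\<close>)
  then show ?thesis
    using \<open>X > 0\<close> by (simp add: h_def)
qed

lemma le_powr_if_nat_ceiling_le:
  fixes c \<epsilon> :: real
  assumes "\<epsilon> > 0" "c \<ge> 0" "nat \<lceil>c powr (1 / \<epsilon>)\<rceil> \<le> N"
  shows "c \<le> real N powr \<epsilon>"
proof -
  have "c = (c powr (1 / \<epsilon>)) powr \<epsilon>"
    using assms by (simp add: powr_powr)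
  also have "\<dots> \<le> real (nat \<lceil>c powr (1 / \<epsilon>)\<rceil>) powr \<epsilon>"
    using assms by (intro powr_mono2 real_nat_ceiling_ge) auto
  also have "\<dots> \<le> real N powr \<epsilon>"
    by (intro powr_mono2 of_nat_mono of_nat_0_le_iff assms(3) less_imp_le[OF assms(1)])
  finally show ?thesis .
qed

lemma mult_divide_le_half:
  fixes a X Y :: real
  assumes "X > 0" "2 * \<bar>a\<bar> + 1 \<le> Y"
  shows "a * X / Y \<le> X / 2"
proof -
  have "Y > 0" "a * X \<le> Y / 2 * X"
    using assms by (auto intro!: mult_right_mono)
  then show ?thesis
    by (simp add: pos_divide_le_eq mult.commute)
qed

lemma real_le_powr_error_term:
  assumes "1 \<le> N" "N \<le> N0"
  shows "real N \<le> real N0 ^ 101 * real N powr (-100)"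
proof -
  have "real N > 0"
    using assms by simp
  then have "real N ^ 101 * real N powr (-100) = real N powr 101 * real N powr (-100)"
    using powr_realpow[of "real N" 101] by simp
  also have "\<dots> = real N powr (101 + (-100))"
    by (rule powr_add[symmetric])
  also have "\<dots> = real N"
    using \<open>real N > 0\<close> by simp
  finally have "real N = real N ^ 101 * real N powr (-100)" ..
  also have "\<dots> \<le> real N0 ^ 101 * real N powr (-100)"
    using assms by (intro mult_right_mono power_mono) auto
  finally show ?thesis .
qed

lemma exp_sum_mean_square_le:
  fixes \<epsilon> :: real and A :: "nat \<Rightarrow> real"
  assumes "\<epsilon> > 0"
  shows "\<exists>K. \<forall>(N::nat) (b::nat \<Rightarrow> complex) (f::real \<Rightarrow> real) (X::real) (Y::real).
       N \<ge> 1 \<and> smooth_real f \<and> X > 0 \<and> Y \<ge> real N powr \<epsilon> \<and>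
       f 0 = 0 \<and> deriv f 0 = X \<and>
       (\<forall>j\<ge>1. \<forall>y. \<bar>y\<bar> \<le> 2 \<longrightarrow> \<bar>(deriv ^^ (j + 1)) f y\<bar> \<le> A j * X / Y ^ j)
       \<longrightarrow>
       integral {-1..1} (\<lambda>y. (cmod (\<Sum>m=1..N. b m * e (real m * f y)))\<^sup>2)
         \<le> integral UNIV (\<lambda>y. gauss_weight y * (cmod (\<Sum>m=1..N. b m * e (real m * X * y)))\<^sup>2)
           + K * real N powr (-100) * (\<Sum>m=1..N. (cmod (b m))\<^sup>2)"
proof -
  define N0 where "N0 = nat \<lceil>(2 * \<bar>A 1\<bar> + 1) powr (1 / \<epsilon>)\<rceil>"
  show ?thesis
  proof (intro exI[of _ "2 * real N0 ^ 101"] allI impI, elim conjE)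
    fix N :: nat and b :: "nat \<Rightarrow> complex" and f :: "real \<Rightarrow> real" and X Y :: real
    assume N: "N \<ge> 1" and f: "smooth_real f" and "X > 0" and Y: "Y \<ge> real N powr \<epsilon>"
      and "f 0 = 0" "deriv f 0 = X"
      and higher_derivs: "\<forall>j\<ge>1. \<forall>y. \<bar>y\<bar> \<le> 2 \<longrightarrow> \<bar>(deriv ^^ (j + 1)) f y\<bar> \<le> A j * X / Y ^ j"
    define I where "I = integral UNIV (\<lambda>y. gauss_weight y * (cmod (\<Sum>m=1..N. b m * e (real m * X * y)))\<^sup>2)"
    define B where "B = (\<Sum>m=1..N. (cmod (b m))\<^sup>2)"
    have "B \<ge> 0"
      unfolding B_def by (auto intro: sum_nonneg)
    have "I \<ge> 0"
      unfolding I_def by (rule integral_gauss_weight_mult_nonneg) simp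
    consider "N0 \<le> N" | "N < N0"
      by linarith
    then show "integral {-1..1} (\<lambda>y. (cmod (\<Sum>m=1..N. b m * e (real m * f y)))\<^sup>2)
                 \<le> I + 2 * real N0 ^ 101 * real N powr (-100) * B"
    proof cases
      case 1
      have "2 * \<bar>A 1\<bar> + 1 \<le> real N powr \<epsilon>"
        by (rule le_powr_if_nat_ceiling_le[OF \<open>\<epsilon> > 0\<close> _ 1[unfolded N0_def]]) simp
      with Y have "A 1 * X / Y \<le> X / 2"
        using \<open>X > 0\<close> mult_divide_le_half by force
      moreover have "\<bar>(deriv ^^ 2) f y\<bar> \<le> A 1 * X / Y" if "\<bar>y\<bar> \<le> 1" for y
        using higher_derivs[rule_format, of 1 y] that by (simp add: numeral_2_eq_2)
      ultimately have "\<bar>(deriv ^^ 2) f y\<bar> \<le> X / 2" if "\<bar>y\<bar> \<le> 1" for y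
        using that by (meson order_trans)
      then have "integral {-1..1} (\<lambda>y. (cmod (\<Sum>m=1..N. b m * e (real m * f y)))\<^sup>2) \<le> I"
        unfolding I_def
        by (rule exp_sum_mean_square_le_weighted[OF f \<open>X > 0\<close> \<open>f 0 = 0\<close> \<open>deriv f 0 = X\<close>])
      moreover have "0 \<le> 2 * real N0 ^ 101 * real N powr (-100) * B"
        using \<open>B \<ge> 0\<close> by simp
      ultimately show ?thesis
        by linarith
    next
      case 2
      from smooth_real_imp_continuous_on[OF f] have "integral {-1..1} (\<lambda>y. (cmod (\<Sum>m=1..N. b m * e (real m * f y)))\<^sup>2)
                   \<le> 2 * real N * B"
        unfolding B_def by (rule exp_sum_mean_square_le_trivial)
      also have "\<dots> \<le> 2 * (real N0 ^ 101 * real N powr (-100)) * B"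
        using real_le_powr_error_term[of N N0] N 2 \<open>B \<ge> 0\<close> by (intro mult_right_mono) auto
      also have "\<dots> \<le> I + 2 * real N0 ^ 101 * real N powr (-100) * B"
        using \<open>I \<ge> 0\<close> by simp
      finally show ?thesis .
    qed
  qed
qed

theorem lemma7p4:
  fixes \<epsilon> :: real and A :: "nat \<Rightarrow> real"
  assumes "\<epsilon> > 0"
  shows "\<exists>q :: real \<Rightarrow> real.
    schwartz q \<and> (\<forall>x. q x \<ge> 0) \<and>
    (\<forall>(j::nat) (C::real). \<exists>K. \<forall>x. \<bar>x ^ j * (deriv ^^ j) q x\<bar> \<le> K * (1 + \<bar>x\<bar>) powr (- C)) \<and>
    (\<exists>K. \<forall>(N::nat) (b::nat \<Rightarrow> complex) (f::real \<Rightarrow> real) (X::real) (Y::real).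
       N \<ge> 1 \<and> smooth_real f \<and> X > 0 \<and> Y \<ge> real N powr \<epsilon> \<and>
       f 0 = 0 \<and> deriv f 0 = X \<and>
       (\<forall>j\<ge>1. \<forall>y. \<bar>y\<bar> \<le> 2 \<longrightarrow> \<bar>(deriv ^^ (j + 1)) f y\<bar> \<le> A j * X / Y ^ j)
       \<longrightarrow>
       integral {-1..1} (\<lambda>y. (cmod (\<Sum>m=1..N. b m * e (real m * f y)))\<^sup>2)
         \<le> integral UNIV (\<lambda>y. q y * (cmod (\<Sum>m=1..N. b m * e (real m * X * y)))\<^sup>2)
           + K * real N powr (-100) * (\<Sum>m=1..N. (cmod (b m))\<^sup>2))"
  by (intro exI[of _ gauss_weight] conjI allI schwartz_gauss_weight gauss_weight_nonneg
      gauss_weight_deriv_decay exp_sum_mean_square_le[OF assms])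

end
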